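(* For integers $1\le k\le n$, the number of binary words of length $n+k-1$ with exactly $2k-1$ zeros equals the number of words of length $n-1$ over the alphabet $\{0,1,2\}$ having exactly $k-1$ letters equal to $2$ and avoiding $01$ (no letter $0$ is immediately followed by the letter $1$).
   Context: Words may be empty. *)

theory Defs
  imports Main
begin

definition words :: "nat \<Rightarrow> nat \<Rightarrow> nat list set" where
  "words q m = {w. length w = m \<and> set w \<subseteq> {..<q}}"

definition avoids01 :: "nat list \<Rightarrow> bool" where
  "avoids01 w \<longleftrightarrow> (\<forall>i. Suc i < length w \<longrightarrow> \<not> (w ! i = 0 \<and> w ! Suc i = 1))"

end

theory Submission
  imports Defs
begin

text \<open>Both sides equal \<open>(n + k - 1) choose (2k - 1)\<close>.
  For ternary 01-avoiding words with \<open>m\<close> letters and \<open>j\<close> twos, sorting by the first letter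
  gives a recurrence that, together with the companion count of such words not starting
  with 1, is solved by \<open>(m + j + 1) choose (2j + 1)\<close> and \<open>(m + j) choose 2j\<close> by Pascal's rule.\<close>

lemma Cons_in_words: "c # w \<in> words q (Suc m) \<longleftrightarrow> c < q \<and> w \<in> words q m"
  by (auto simp: words_def)

lemma in_words_Suc: "w \<in> words q (Suc m) \<longleftrightarrow> (\<exists>c v. w = c # v \<and> c < q \<and> v \<in> words q m)"
  by (cases w) (auto simp: words_def)

lemma words_0: "words q 0 = {[]}"
  by (auto simp: words_def)

lemma finite_words: "finite (words q m)"
  unfolding words_def using finite_lists_length_eq[of "{..<q}" m] by (simp add: conj_commute)

lemma card_image_Cons: "card ((#) x ` A) = card A"
  by (rule card_image) (auto simp: inj_on_def)

lemma card_Un_images_Cons: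
  assumes "a \<noteq> b" "finite A" "finite B"
  shows "card ((#) a ` A \<union> (#) b ` B) = card A + card B"
  using assms by (subst card_Un_disjoint) (auto simp: card_image_Cons)

lemma card_Un3_images_Cons:
  assumes "a \<noteq> b" "a \<noteq> c" "b \<noteq> c" "finite A" "finite B" "finite C"
  shows "card ((#) a ` A \<union> (#) b ` B \<union> (#) c ` C) = card A + card B + card C"
  using assms by (subst card_Un_disjoint) (auto simp: card_Un_images_Cons card_image_Cons)

lemma avoids01_Nil: "avoids01 []"
  by (simp add: avoids01_def)

lemma avoids01_Cons:
  "avoids01 (c # w) \<longleftrightarrow> avoids01 w \<and> \<not> (c = 0 \<and> w \<noteq> [] \<and> hd w = 1)"
  unfolding avoids01_def by (cases w) (auto simp: All_less_Suc2)

lemma card_words_2_count_0: "card {w \<in> words 2 m. count_list w 0 = z} = m choose z"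
proof (induction m arbitrary: z)
  case 0
  then show ?case by (cases z) (auto simp: words_0 Collect_conv_if)
next
  case (Suc m)
  let ?B = "\<lambda>m z. {w \<in> words 2 m. count_list w 0 = z}"
  have fin: "finite (?B m z)" for z
    using finite_words by auto
  show ?case
  proof (cases z)
    case 0
    have "?B (Suc m) 0 = (#) 1 ` ?B m 0"
      by (auto simp: in_words_Suc Cons_in_words less_2_cases_iff)
    then show ?thesis using Suc.IH 0 by (simp add: card_image_Cons)
  next
    case (Suc z')
    have "?B (Suc m) (Suc z') = (#) 1 ` ?B m (Suc z') \<union> (#) 0 ` ?B m z'"
      by (auto simp: in_words_Suc Cons_in_words less_2_cases_iff)
    then have "card (?B (Suc m) (Suc z')) = card (?B m (Suc z')) + card (?B m z')"
      by (simp add: card_Un_images_Cons fin)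
    then show ?thesis using Suc.IH Suc by simp
  qed
qed

definition avoiding_words :: "nat \<Rightarrow> nat \<Rightarrow> nat list set" where
  "avoiding_words m j = {w \<in> words 3 m. count_list w 2 = j \<and> avoids01 w}"

definition avoiding_words_no_leading_1 :: "nat \<Rightarrow> nat \<Rightarrow> nat list set" where
  "avoiding_words_no_leading_1 m j = {w \<in> avoiding_words m j. w = [] \<or> hd w \<noteq> 1}"

lemma finite_avoiding_words: "finite (avoiding_words m j)"
  using finite_words by (simp add: avoiding_words_def)

lemma finite_avoiding_words_no_leading_1: "finite (avoiding_words_no_leading_1 m j)"
  using finite_avoiding_words by (simp add: avoiding_words_no_leading_1_def)

lemma avoiding_words_0: "avoiding_words 0 j = (if j = 0 then {[]} else {})"
  by (auto simp: avoiding_words_def words_0 avoids01_Nil)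

lemma avoiding_words_no_leading_1_0: "avoiding_words_no_leading_1 0 j = (if j = 0 then {[]} else {})"
  by (auto simp: avoiding_words_no_leading_1_def avoiding_words_0)

lemmas avoiding_words_simps = avoiding_words_no_leading_1_def avoiding_words_def
  in_words_Suc Cons_in_words avoids01_Cons less_Suc_eq numeral_3_eq_3

lemma avoiding_words_Suc_0:
  "avoiding_words (Suc m) 0 = (#) 0 ` avoiding_words_no_leading_1 m 0 \<union> (#) 1 ` avoiding_words m 0"
  by (auto simp: avoiding_words_simps)

lemma avoiding_words_Suc_Suc:
  "avoiding_words (Suc m) (Suc j) = (#) 0 ` avoiding_words_no_leading_1 m (Suc j)
     \<union> (#) 1 ` avoiding_words m (Suc j) \<union> (#) 2 ` avoiding_words m j"
  by (auto simp: avoiding_words_simps)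

lemma avoiding_words_no_leading_1_Suc_0:
  "avoiding_words_no_leading_1 (Suc m) 0 = (#) 0 ` avoiding_words_no_leading_1 m 0"
  by (auto simp: avoiding_words_simps)

lemma avoiding_words_no_leading_1_Suc_Suc:
  "avoiding_words_no_leading_1 (Suc m) (Suc j) =
     (#) 0 ` avoiding_words_no_leading_1 m (Suc j) \<union> (#) 2 ` avoiding_words m j"
  by (auto simp: avoiding_words_simps)

lemma card_avoiding_words:
  "card (avoiding_words m j) = (m + j + 1) choose (2 * j + 1) \<and>
   card (avoiding_words_no_leading_1 m j) = (m + j) choose (2 * j)"
proof (induction m arbitrary: j)
  case 0
  then show ?case by (simp add: avoiding_words_0 avoiding_words_no_leading_1_0)
next
  case (Suc m)
  note fin = finite_avoiding_words finite_avoiding_words_no_leading_1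
  show ?case
  proof (cases j)
    case 0
    then show ?thesis
      using Suc.IH[of 0]
      by (simp add: avoiding_words_Suc_0 avoiding_words_no_leading_1_Suc_0
          card_Un_images_Cons card_image_Cons fin)
  next
    case (Suc i)
    have "card (avoiding_words (Suc m) (Suc i)) = card (avoiding_words_no_leading_1 m (Suc i))
        + card (avoiding_words m (Suc i)) + card (avoiding_words m i)"
      by (simp add: avoiding_words_Suc_Suc card_Un3_images_Cons fin)
    moreover have "card (avoiding_words_no_leading_1 (Suc m) (Suc i)) =
        card (avoiding_words_no_leading_1 m (Suc i)) + card (avoiding_words m i)"
      by (simp add: avoiding_words_no_leading_1_Suc_Suc card_Un_images_Cons fin)
    ultimately show ?thesis
      using Suc.IH[of i] Suc.IH[of "Suc i"] Suc by simp
  qed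
qed

theorem mainTheorem16:
  fixes n k :: nat
  assumes "1 \<le> k" and "k \<le> n"
  shows "card {w \<in> words 2 (n + k - 1). count_list w 0 = 2 * k - 1}
       = card {w \<in> words 3 (n - 1). count_list w 2 = k - 1 \<and> avoids01 w}"
proof -
  have "card {w \<in> words 3 (n - 1). count_list w 2 = k - 1 \<and> avoids01 w}
      = (n - 1 + (k - 1) + 1) choose (2 * (k - 1) + 1)"
    using card_avoiding_words by (simp add: avoiding_words_def)
  also have "\<dots> = (n + k - 1) choose (2 * k - 1)"
    using assms by (intro arg_cong2[where f = binomial]) auto
  finally show ?thesis
    by (simp add: card_words_2_count_0)
qed

end
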